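(* Let $R$ be a $\mathbb{C}$-algebra which is a noetherian UFD, let $r,s\in R$ be nonzero elements sharing no common non-unit factor, and let $A_{r,s}:=R[U,V]/(rU-sV-1)$ with $u,v$ the residue classes of $U,V$. Assume that $A_{r,s}$ is a UFD and that $ML(A_{r,s})=R$. Then $\operatorname{LND}(A_{r,s})=R\,E=\{aE: a\in R\}$, where $E$ is the $R$-derivation of $A_{r,s}$ determined by $E(u)=s$, $E(v)=r$.
   Context: A derivation $D$ of a ring $B$ is locally nilpotent if for every $b\in B$ there is $n$ with $D^n(b)=0$; $\operatorname{LND}(B)$ denotes the set of locally nilpotent $\mathbb{C}$-derivations of the $\mathbb{C}$-algebra $B$. The Makar-Limanov invariant $ML(B)$ is the intersection of the kernels of all $D\in\operatorname{LND}(B)$. The derivation $E$ (written $s\partial_u+r\partial_v$ in the paper) is well defined since $E(ru-sv-1)=rs-sr=0$. *)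

theory Defs
  imports Complex_Main "HOL-Algebra.Algebra"
begin

definition complex_ring :: "complex ring" where
  "complex_ring = \<lparr>carrier = UNIV, monoid.mult = (*), one = 1, ring.zero = 0, ring.add = (+)\<rparr>"

text \<open>The bivariate polynomial ring R[U,V], realised as (R[U])[V].\<close>
abbreviation UP2 :: "('a, 'm) ring_scheme \<Rightarrow> (nat \<Rightarrow> 'a, nat \<Rightarrow> nat \<Rightarrow> 'a) up_ring" where
  "UP2 R \<equiv> UP (UP R)"

definition cst2 :: "('a, 'm) ring_scheme \<Rightarrow> 'a \<Rightarrow> nat \<Rightarrow> nat \<Rightarrow> 'a" where
  "cst2 R a = monom (UP2 R) (monom (UP R) a 0) 0"

definition Uvar :: "('a, 'm) ring_scheme \<Rightarrow> nat \<Rightarrow> nat \<Rightarrow> 'a" where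
  "Uvar R = monom (UP2 R) (monom (UP R) \<one>\<^bsub>R\<^esub> 1) 0"

definition Vvar :: "('a, 'm) ring_scheme \<Rightarrow> nat \<Rightarrow> nat \<Rightarrow> 'a" where
  "Vvar R = monom (UP2 R) \<one>\<^bsub>UP R\<^esub> 1"

definition frs :: "('a, 'm) ring_scheme \<Rightarrow> 'a \<Rightarrow> 'a \<Rightarrow> nat \<Rightarrow> nat \<Rightarrow> 'a" where
  "frs R r s = (cst2 R r \<otimes>\<^bsub>UP2 R\<^esub> Uvar R) \<ominus>\<^bsub>UP2 R\<^esub> (cst2 R s \<otimes>\<^bsub>UP2 R\<^esub> Vvar R)
                \<ominus>\<^bsub>UP2 R\<^esub> \<one>\<^bsub>UP2 R\<^esub>"

definition Ars :: "('a, 'm) ring_scheme \<Rightarrow> 'a \<Rightarrow> 'a \<Rightarrow> (nat \<Rightarrow> nat \<Rightarrow> 'a) set ring" where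
  "Ars R r s = (UP2 R) Quot (PIdl\<^bsub>UP2 R\<^esub> (frs R r s))"

definition resid :: "('a, 'm) ring_scheme \<Rightarrow> 'a \<Rightarrow> 'a \<Rightarrow> (nat \<Rightarrow> nat \<Rightarrow> 'a) \<Rightarrow> (nat \<Rightarrow> nat \<Rightarrow> 'a) set" where
  "resid R r s p = (PIdl\<^bsub>UP2 R\<^esub> (frs R r s)) +>\<^bsub>UP2 R\<^esub> p"

definition rho :: "('a, 'm) ring_scheme \<Rightarrow> 'a \<Rightarrow> 'a \<Rightarrow> 'a \<Rightarrow> (nat \<Rightarrow> nat \<Rightarrow> 'a) set" where
  "rho R r s a = resid R r s (cst2 R a)"

definition uel :: "('a, 'm) ring_scheme \<Rightarrow> 'a \<Rightarrow> 'a \<Rightarrow> (nat \<Rightarrow> nat \<Rightarrow> 'a) set" where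
  "uel R r s = resid R r s (Uvar R)"

definition vel :: "('a, 'm) ring_scheme \<Rightarrow> 'a \<Rightarrow> 'a \<Rightarrow> (nat \<Rightarrow> nat \<Rightarrow> 'a) set" where
  "vel R r s = resid R r s (Vvar R)"

definition lin_derivation :: "('x, 'n) ring_scheme \<Rightarrow> 'c set \<Rightarrow> ('c \<Rightarrow> 'x) \<Rightarrow> ('x \<Rightarrow> 'x) \<Rightarrow> bool" where
  "lin_derivation A S emb D \<longleftrightarrow>
     D \<in> carrier A \<rightarrow> carrier A \<and>
     (\<forall>x\<in>carrier A. \<forall>y\<in>carrier A. D (x \<oplus>\<^bsub>A\<^esub> y) = D x \<oplus>\<^bsub>A\<^esub> D y) \<and>
     (\<forall>x\<in>carrier A. \<forall>y\<in>carrier A. D (x \<otimes>\<^bsub>A\<^esub> y) = (x \<otimes>\<^bsub>A\<^esub> D y) \<oplus>\<^bsub>A\<^esub> (D x \<otimes>\<^bsub>A\<^esub> y)) \<and>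
     (\<forall>c\<in>S. \<forall>x\<in>carrier A. D (emb c \<otimes>\<^bsub>A\<^esub> x) = emb c \<otimes>\<^bsub>A\<^esub> D x)"

definition is_LND :: "('x, 'n) ring_scheme \<Rightarrow> (complex \<Rightarrow> 'x) \<Rightarrow> ('x \<Rightarrow> 'x) \<Rightarrow> bool" where
  "is_LND A cemb D \<longleftrightarrow> lin_derivation A (UNIV :: complex set) cemb D \<and>
     (\<forall>b\<in>carrier A. \<exists>n. (D ^^ n) b = \<zero>\<^bsub>A\<^esub>)"

definition makar_limanov :: "('x, 'n) ring_scheme \<Rightarrow> (complex \<Rightarrow> 'x) \<Rightarrow> 'x set" where
  "makar_limanov A cemb = {x \<in> carrier A. \<forall>D. is_LND A cemb D \<longrightarrow> D x = \<zero>\<^bsub>A\<^esub>}"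

end

theory Submission
  imports Defs
begin

text \<open>
  Every R-derivation D of A = A_{r,s} satisfies D(v) E = r D: both sides are derivations
  vanishing on R, they agree on v, and on u because applying D to r u = 1 + s v gives
  r D(u) = s D(v). If D is locally nilpotent, iterating yields (D(v) E)^N v = r^N D^N v = 0
  for large N. As v is a local slice of E (E v = r, E^2 v = 0) and A has characteristic zero,
  comparing exact E-degrees forces E(D v) = 0. Every element z of ker E is killed by all
  locally nilpotent derivations D', since r D'(z) = D'(v) E(z) = 0; hence
  ker E \<subseteq> ML(A) = R. So D v = b and D u = c lie in R with r c = s b, coprimality gives
  b = a r, and cancelling r in r D = b E yields D = a E. Conversely a E is locally nilpotent
  because E is.
\<close>

section \<open>Polynomial induction, quotient maps and dual numbers\<close>

lemma (in ring) finsum_closed_under: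
  assumes "finite F" "f \<in> F \<rightarrow> carrier R" "\<And>i. i \<in> F \<Longrightarrow> Q (f i)" "Q \<zero>"
    and "\<And>x y. x \<in> carrier R \<Longrightarrow> y \<in> carrier R \<Longrightarrow> Q x \<Longrightarrow> Q y \<Longrightarrow> Q (x \<oplus> y)"
  shows "Q (finsum R f F)"
  using assms(1-3)
proof (induction F rule: finite_induct)
  case empty then show ?case using assms(4) by simp
next
  case (insert x F) then show ?case using assms(5) by (simp add: Pi_def)
qed

lemma (in monoid) nat_pow_closed_under:
  assumes "x \<in> carrier G" "Q x" "Q \<one>"
    and "\<And>x y. x \<in> carrier G \<Longrightarrow> y \<in> carrier G \<Longrightarrow> Q x \<Longrightarrow> Q y \<Longrightarrow> Q (x \<otimes> y)"
  shows "Q (x [^] (n::nat))"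
  by (induction n) (simp_all add: assms)

lemma (in UP_cring) ring_hom_image_induct:
  assumes h: "h \<in> ring_hom P S" and S: "ring S"
    and add: "\<And>x y. x \<in> carrier S \<Longrightarrow> y \<in> carrier S \<Longrightarrow> Q x \<Longrightarrow> Q y \<Longrightarrow> Q (x \<oplus>\<^bsub>S\<^esub> y)"
    and mult: "\<And>x y. x \<in> carrier S \<Longrightarrow> y \<in> carrier S \<Longrightarrow> Q x \<Longrightarrow> Q y \<Longrightarrow> Q (x \<otimes>\<^bsub>S\<^esub> y)"
    and const: "\<And>a. a \<in> carrier R \<Longrightarrow> Q (h (UnivPoly.monom P a 0))"
    and var: "Q (h (UnivPoly.monom P \<one> 1))"
    and p: "p \<in> carrier P"
  shows "Q (h p)"
proof -
  interpret h: ring_hom_ring P S h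
    by (rule ring_hom_ringI2) (simp_all add: UP_ring S h)
  have Q0: "Q \<zero>\<^bsub>S\<^esub>" and Q1: "Q \<one>\<^bsub>S\<^esub>" using const[of \<zero>] const[of \<one>] by simp_all
  have "h p = h (\<Oplus>\<^bsub>P\<^esub>i \<in> {..deg R p}. UnivPoly.monom P (UnivPoly.coeff P p i) 0 \<otimes>\<^bsub>P\<^esub> UnivPoly.monom P \<one> 1 [^]\<^bsub>P\<^esub> i)"
    by (simp add: up_repr p monom_mult [THEN sym] monom_pow del: monom_mult)
  also have "\<dots> = (\<Oplus>\<^bsub>S\<^esub>i \<in> {..deg R p}. h (UnivPoly.monom P (UnivPoly.coeff P p i) 0 \<otimes>\<^bsub>P\<^esub> UnivPoly.monom P \<one> 1 [^]\<^bsub>P\<^esub> i))"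
    using p by (subst h.hom_finsum) (simp_all add: Pi_def comp_def)
  also have "\<dots> = (\<Oplus>\<^bsub>S\<^esub>i \<in> {..deg R p}. h (UnivPoly.monom P (UnivPoly.coeff P p i) 0) \<otimes>\<^bsub>S\<^esub> h (UnivPoly.monom P \<one> 1) [^]\<^bsub>S\<^esub> i)"
    using p by (intro h.S.finsum_cong') (simp_all add: Pi_def h.hom_nat_pow)
  also have "Q \<dots>"
  proof (rule ring.finsum_closed_under[OF S])
    fix i :: nat
    have "Q (h (UnivPoly.monom P \<one> 1) [^]\<^bsub>S\<^esub> i)"
      using var Q1 mult by (intro monoid.nat_pow_closed_under[OF h.S.monoid_axioms, where Q = Q]) simp_all
    then show "Q (h (UnivPoly.monom P (UnivPoly.coeff P p i) 0) \<otimes>\<^bsub>S\<^esub> h (UnivPoly.monom P \<one> 1) [^]\<^bsub>S\<^esub> i)"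
      using p by (intro mult) (simp_all add: const)
  qed (use p in \<open>simp_all add: Pi_def Q0 add\<close>)
  finally show ?thesis .
qed

lemma (in ring) ring_hom_quotient_lift:
  assumes I: "ideal I R" and h: "h \<in> ring_hom R S" and S: "ring S"
    and kill: "\<And>i. i \<in> I \<Longrightarrow> h i = \<zero>\<^bsub>S\<^esub>"
  obtains \<psi> where "\<psi> \<in> ring_hom (R Quot I) S" and "\<And>x. x \<in> carrier R \<Longrightarrow> \<psi> (I +> x) = h x"
proof
  interpret I: ideal I R by (rule I)
  interpret h: ring_hom_ring R S h by (rule ring_hom_ringI2[OF ring_axioms S h])
  define \<psi> where "\<psi> C = the_elem (h ` C)" for C
  have coset: "h ` (I +> x) = {h x}" if x: "x \<in> carrier R" for x
  proof -
    have "h (i \<oplus> x) = h x" if "i \<in> I" for i using that x kill I.a_Hcarr by simp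
    then show ?thesis using I.a_rcos_self[OF x] unfolding a_r_coset_def r_coset_def by auto
  qed
  then show \<psi>: "\<psi> (I +> x) = h x" if "x \<in> carrier R" for x
    using that by (simp add: \<psi>_def)
  have rep: "\<exists>x\<in>carrier R. C = I +> x" if "C \<in> carrier (R Quot I)" for C
    using that unfolding FactRing_def A_RCOSETS_def' by auto
  show "\<psi> \<in> ring_hom (R Quot I) S"
  proof (rule ring_hom_memI)
    fix C D assume "C \<in> carrier (R Quot I)" "D \<in> carrier (R Quot I)"
    then obtain x y where x: "x \<in> carrier R" "C = I +> x" and y: "y \<in> carrier R" "D = I +> y"
      using rep by blast
    show "\<psi> C \<in> carrier S" using x \<psi> by simp
    show "\<psi> (C \<otimes>\<^bsub>R Quot I\<^esub> D) = \<psi> C \<otimes>\<^bsub>S\<^esub> \<psi> D"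
      using x y \<psi> ring_hom_mult[OF I.rcos_ring_hom x(1) y(1), symmetric] by simp
    show "\<psi> (C \<oplus>\<^bsub>R Quot I\<^esub> D) = \<psi> C \<oplus>\<^bsub>S\<^esub> \<psi> D"
      using x y \<psi> ring_hom_add[OF I.rcos_ring_hom x(1) y(1), symmetric] by simp
  next
    show "\<psi> \<one>\<^bsub>R Quot I\<^esub> = \<one>\<^bsub>S\<^esub>"
      using \<psi> ring_hom_one[OF I.rcos_ring_hom] by (metis one_closed h.hom_one)
  qed
qed

lemma funpow_cong_on:
  assumes "f \<in> S \<rightarrow> S" "\<And>x. x \<in> S \<Longrightarrow> f x = g x" "x \<in> S"
  shows "(f ^^ n) x = (g ^^ n) x"
proof -
  have "(f ^^ n) x = (g ^^ n) x \<and> (f ^^ n) x \<in> S"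
    by (induction n) (use assms in auto)
  then show ?thesis ..
qed

definition dual_numbers :: "('x, 'm) ring_scheme \<Rightarrow> ('x \<times> 'x) ring" where
  "dual_numbers A = \<lparr>carrier = carrier A \<times> carrier A,
     monoid.mult = (\<lambda>x y. (fst x \<otimes>\<^bsub>A\<^esub> fst y, fst x \<otimes>\<^bsub>A\<^esub> snd y \<oplus>\<^bsub>A\<^esub> snd x \<otimes>\<^bsub>A\<^esub> fst y)),
     one = (\<one>\<^bsub>A\<^esub>, \<zero>\<^bsub>A\<^esub>), ring.zero = (\<zero>\<^bsub>A\<^esub>, \<zero>\<^bsub>A\<^esub>),
     ring.add = (\<lambda>x y. (fst x \<oplus>\<^bsub>A\<^esub> fst y, snd x \<oplus>\<^bsub>A\<^esub> snd y))\<rparr>"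

lemma dual_numbers_simps:
  "carrier (dual_numbers A) = carrier A \<times> carrier A"
  "x \<otimes>\<^bsub>dual_numbers A\<^esub> y = (fst x \<otimes>\<^bsub>A\<^esub> fst y, fst x \<otimes>\<^bsub>A\<^esub> snd y \<oplus>\<^bsub>A\<^esub> snd x \<otimes>\<^bsub>A\<^esub> fst y)"
  "\<one>\<^bsub>dual_numbers A\<^esub> = (\<one>\<^bsub>A\<^esub>, \<zero>\<^bsub>A\<^esub>)"
  "\<zero>\<^bsub>dual_numbers A\<^esub> = (\<zero>\<^bsub>A\<^esub>, \<zero>\<^bsub>A\<^esub>)"
  "x \<oplus>\<^bsub>dual_numbers A\<^esub> y = (fst x \<oplus>\<^bsub>A\<^esub> fst y, snd x \<oplus>\<^bsub>A\<^esub> snd y)"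
  by (simp_all add: dual_numbers_def)

lemma (in cring) cring_dual_numbers: "cring (dual_numbers R)"
proof (rule cringI)
  show "abelian_group (dual_numbers R)"
  proof (rule abelian_groupI)
    fix x assume "x \<in> carrier (dual_numbers R)"
    then show "\<exists>y\<in>carrier (dual_numbers R). y \<oplus>\<^bsub>dual_numbers R\<^esub> x = \<zero>\<^bsub>dual_numbers R\<^esub>"
      by (intro bexI[of _ "(\<ominus> fst x, \<ominus> snd x)"]) (auto simp: dual_numbers_simps mem_Times_iff l_neg)
  qed (auto simp: dual_numbers_simps mem_Times_iff a_ac)
  show "comm_monoid (dual_numbers R)"
    by (rule comm_monoidI) (auto simp: dual_numbers_simps mem_Times_iff m_ac r_distr l_distr a_ac)
qed (auto simp: dual_numbers_simps mem_Times_iff m_ac r_distr l_distr a_ac)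

lemma (in cring) dual_numbers_minus:
  assumes "x \<in> carrier (dual_numbers R)" "y \<in> carrier (dual_numbers R)"
  shows "x \<ominus>\<^bsub>dual_numbers R\<^esub> y = (fst x \<ominus> fst y, snd x \<ominus> snd y)"
proof -
  interpret D: cring "dual_numbers R" by (rule cring_dual_numbers)
  have "\<ominus>\<^bsub>dual_numbers R\<^esub> y = (\<ominus> fst y, \<ominus> snd y)"
    using assms by (intro D.minus_equality) (auto simp: dual_numbers_simps mem_Times_iff l_neg)
  then show ?thesis using assms by (simp add: D.minus_eq minus_eq dual_numbers_simps)
qed

lemma (in cring) fst_ring_hom_dual_numbers: "fst \<in> ring_hom (dual_numbers R) R"
  by (rule ring_hom_memI) (auto simp: dual_numbers_simps mem_Times_iff)

section \<open>Derivations\<close>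

definition derivation :: "('x, 'n) ring_scheme \<Rightarrow> ('x \<Rightarrow> 'x) \<Rightarrow> bool" where
  "derivation A D \<longleftrightarrow> D \<in> carrier A \<rightarrow> carrier A \<and>
     (\<forall>x\<in>carrier A. \<forall>y\<in>carrier A. D (x \<oplus>\<^bsub>A\<^esub> y) = D x \<oplus>\<^bsub>A\<^esub> D y) \<and>
     (\<forall>x\<in>carrier A. \<forall>y\<in>carrier A. D (x \<otimes>\<^bsub>A\<^esub> y) = (x \<otimes>\<^bsub>A\<^esub> D y) \<oplus>\<^bsub>A\<^esub> (D x \<otimes>\<^bsub>A\<^esub> y))"

definition locally_nilpotent :: "('x, 'n) ring_scheme \<Rightarrow> ('x \<Rightarrow> 'x) \<Rightarrow> bool" where
  "locally_nilpotent A D \<longleftrightarrow> (\<forall>b\<in>carrier A. \<exists>n. (D ^^ n) b = \<zero>\<^bsub>A\<^esub>)"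

lemma lin_derivation_imp_derivation: "lin_derivation A S emb D \<Longrightarrow> derivation A D"
  unfolding lin_derivation_def derivation_def by blast

lemma is_LND_iff: "is_LND A cemb D \<longleftrightarrow> lin_derivation A UNIV cemb D \<and> locally_nilpotent A D"
  unfolding is_LND_def locally_nilpotent_def ..

context cring
begin

lemma derivation_closed: "derivation R D \<Longrightarrow> x \<in> carrier R \<Longrightarrow> D x \<in> carrier R"
  unfolding derivation_def by blast

lemma derivation_add: "derivation R D \<Longrightarrow> x \<in> carrier R \<Longrightarrow> y \<in> carrier R \<Longrightarrow> D (x \<oplus> y) = D x \<oplus> D y"
  unfolding derivation_def by blast

lemma derivation_mult:
  "derivation R D \<Longrightarrow> x \<in> carrier R \<Longrightarrow> y \<in> carrier R \<Longrightarrow> D (x \<otimes> y) = x \<otimes> D y \<oplus> D x \<otimes> y"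
  unfolding derivation_def by blast

lemma derivation_zero: assumes "derivation R D" shows "D \<zero> = \<zero>"
  using derivation_add[OF assms, of \<zero> \<zero>] derivation_closed[OF assms, of \<zero>]
  by (simp add: add.l_cancel_one')

lemma derivation_one: assumes "derivation R D" shows "D \<one> = \<zero>"
  using derivation_mult[OF assms, of \<one> \<one>] derivation_closed[OF assms, of \<one>]
  by (simp add: add.l_cancel_one')

lemma derivation_of_nat: assumes "derivation R D" shows "D ([(k::nat)] \<cdot> \<one>) = \<zero>"
  by (induction k) (simp_all add: add.nat_pow_Suc derivation_add derivation_zero derivation_one assms)

lemma derivation_funpow_closed: "derivation R D \<Longrightarrow> x \<in> carrier R \<Longrightarrow> (D ^^ n) x \<in> carrier R"
  by (induction n) (simp_all add: derivation_closed)

lemma derivation_funpow_zero: "derivation R D \<Longrightarrow> (D ^^ n) \<zero> = \<zero>"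
  by (induction n) (simp_all add: derivation_zero)

lemma derivation_funpow_add:
  "derivation R D \<Longrightarrow> x \<in> carrier R \<Longrightarrow> y \<in> carrier R \<Longrightarrow> (D ^^ n) (x \<oplus> y) = (D ^^ n) x \<oplus> (D ^^ n) y"
  by (induction n) (simp_all add: derivation_add derivation_funpow_closed)

lemma derivation_funpow_mult_const:
  assumes D: "derivation R D" and c: "c \<in> carrier R" "D c = \<zero>" and x: "x \<in> carrier R"
  shows "(D ^^ n) (c \<otimes> x) = c \<otimes> (D ^^ n) x"
  by (induction n) (simp_all add: x c derivation_mult[OF D] derivation_funpow_closed[OF D]
      derivation_closed[OF D])

lemma derivation_scale:
  assumes D: "derivation R D" and c: "c \<in> carrier R"
  shows "derivation R (\<lambda>x. c \<otimes> D x)"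
  unfolding derivation_def
proof (intro conjI ballI)
  show "(\<lambda>x. c \<otimes> D x) \<in> carrier R \<rightarrow> carrier R"
    using c derivation_closed[OF D] by simp
  fix x y assume x: "x \<in> carrier R" and y: "y \<in> carrier R"
  have Dx: "D x \<in> carrier R" and Dy: "D y \<in> carrier R"
    using x y derivation_closed[OF D] by auto
  show "c \<otimes> D (x \<oplus> y) = c \<otimes> D x \<oplus> c \<otimes> D y"
    using x y c Dx Dy by (simp add: derivation_add[OF D] r_distr)
  show "c \<otimes> D (x \<otimes> y) = x \<otimes> (c \<otimes> D y) \<oplus> c \<otimes> D x \<otimes> y"
    using x y c Dx Dy by (simp add: derivation_mult[OF D] r_distr m_lcomm m_assoc)
qed

lemma derivation_nat_pow_const:
  assumes D: "derivation R D" and c: "c \<in> carrier R" "D c = \<zero>"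
  shows "D (c [^] (n::nat)) = \<zero>"
  by (induction n) (simp_all add: c derivation_one[OF D] derivation_mult[OF D])

lemma derivation_funpow_scale:
  assumes D: "derivation R D" and c: "c \<in> carrier R" "D c = \<zero>" and x: "x \<in> carrier R"
  shows "((\<lambda>y. c \<otimes> D y) ^^ n) x = c [^] n \<otimes> (D ^^ n) x"
proof (induction n)
  case (Suc n)
  have Dn: "D ((D ^^ n) x) \<in> carrier R" "(D ^^ n) x \<in> carrier R"
    using derivation_closed[OF D] derivation_funpow_closed[OF D x] by auto
  have "((\<lambda>y. c \<otimes> D y) ^^ Suc n) x = c \<otimes> (c [^] n \<otimes> D ((D ^^ n) x))"
    using Suc Dn c by (simp add: derivation_mult[OF D] derivation_nat_pow_const[OF D c])
  then show ?case using c Dn by (simp add: m_ac)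
qed (simp add: x)

lemma derivation_dual_hom:
  assumes h: "h \<in> ring_hom R (dual_numbers R)" and fst_h: "\<And>x. x \<in> carrier R \<Longrightarrow> fst (h x) = x"
  shows "derivation R (snd \<circ> h)"
  unfolding derivation_def
proof (intro conjI ballI)
  show "snd \<circ> h \<in> carrier R \<rightarrow> carrier R"
    using ring_hom_closed[OF h] by (fastforce simp: dual_numbers_simps mem_Times_iff)
  fix x y assume x: "x \<in> carrier R" and y: "y \<in> carrier R"
  show "(snd \<circ> h) (x \<oplus> y) = (snd \<circ> h) x \<oplus> (snd \<circ> h) y"
    using ring_hom_add[OF h x y] by (simp add: dual_numbers_simps)
  show "(snd \<circ> h) (x \<otimes> y) = x \<otimes> (snd \<circ> h) y \<oplus> (snd \<circ> h) x \<otimes> y"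
    using ring_hom_mult[OF h x y] fst_h[OF x] fst_h[OF y] by (simp add: dual_numbers_simps)
qed

lemma derivation_cong:
  assumes "derivation R D" and "\<And>x. x \<in> carrier R \<Longrightarrow> D' x = D x"
  shows "derivation R D'"
  using assms unfolding derivation_def by (simp add: Pi_iff)

lemma lin_derivation_iff:
  assumes "emb \<in> S \<rightarrow> carrier R"
  shows "lin_derivation R S emb D \<longleftrightarrow> derivation R D \<and> (\<forall>c\<in>S. D (emb c) = \<zero>)"
proof
  assume lin: "lin_derivation R S emb D"
  then have D: "derivation R D" by (rule lin_derivation_imp_derivation)
  have "D (emb c) = \<zero>" if "c \<in> S" for c
    using lin that assms derivation_one[OF D] unfolding lin_derivation_def
    by (metis Pi_mem one_closed r_one r_null)
  with D show "derivation R D \<and> (\<forall>c\<in>S. D (emb c) = \<zero>)" by blast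
next
  assume "derivation R D \<and> (\<forall>c\<in>S. D (emb c) = \<zero>)"
  then show "lin_derivation R S emb D"
    using assms derivation_closed
    unfolding lin_derivation_def derivation_def by (auto simp: Pi_iff)
qed

lemma derivation_funpow_mult_top:
  assumes D: "derivation R D" and a: "a \<in> carrier R" and b: "b \<in> carrier R"
    and ha: "(D ^^ Suc m) a = \<zero>" and hb: "(D ^^ Suc n) b = \<zero>"
  shows "(D ^^ (m + n)) (a \<otimes> b) = [(m + n choose m)] \<cdot> \<one> \<otimes> ((D ^^ m) a \<otimes> (D ^^ n) b)"
  using a b ha hb
proof (induction "m + n" arbitrary: m n a b)
  case 0 then show ?case by simp
next
  case (Suc N)
  note Dcl = derivation_closed[OF D] derivation_funpow_closed[OF D]
  show ?case
  proof (cases m)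
    case 0
    then have "D a = \<zero>" using Suc.prems by simp
    then show ?thesis
      using 0 Suc.prems Dcl by (simp add: derivation_funpow_mult_const[OF D] add.nat_pow_Suc)
  next
    case m: (Suc m')
    show ?thesis
    proof (cases n)
      case 0
      then have "D b = \<zero>" using Suc.prems by simp
      then have "(D ^^ m) (b \<otimes> a) = b \<otimes> (D ^^ m) a"
        using Suc.prems by (intro derivation_funpow_mult_const[OF D])
      then show ?thesis
        using 0 Suc.prems Dcl by (simp add: m_comm add.nat_pow_Suc)
    next
      case n: (Suc n')
      have a: "a \<in> carrier R" "D a \<in> carrier R" and b: "b \<in> carrier R" "D b \<in> carrier R"
        using Suc.prems Dcl by auto
      have IH1: "(D ^^ N) (a \<otimes> D b) = [(N choose m)] \<cdot> \<one> \<otimes> ((D ^^ m) a \<otimes> (D ^^ n) b)"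
        using Suc.hyps(1)[of m n'] Suc.hyps(2) Suc.prems a b n
        by (simp add: funpow_Suc_right del: funpow.simps)
      have IH2: "(D ^^ N) (D a \<otimes> b) = [(N choose m')] \<cdot> \<one> \<otimes> ((D ^^ m) a \<otimes> (D ^^ n) b)"
        using Suc.hyps(1)[of m' n] Suc.hyps(2) Suc.prems a b m
        by (simp add: funpow_Suc_right del: funpow.simps)
      have "(D ^^ Suc N) (a \<otimes> b) = (D ^^ N) (a \<otimes> D b) \<oplus> (D ^^ N) (D a \<otimes> b)"
        using a b by (simp add: funpow_Suc_right derivation_mult[OF D] derivation_funpow_add[OF D]
            del: funpow.simps)
      also have "\<dots> = ([(N choose m)] \<cdot> \<one> \<oplus> [(N choose m')] \<cdot> \<one>) \<otimes> ((D ^^ m) a \<otimes> (D ^^ n) b)"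
        unfolding IH1 IH2 using a b Dcl by (simp add: l_distr)
      also have "[(N choose m)] \<cdot> \<one> \<oplus> [(N choose m')] \<cdot> \<one> = [(Suc N choose m)] \<cdot> \<one>"
        using m by (simp add: add.nat_pow_mult add.commute)
      finally show ?thesis using Suc.hyps(2) by simp
    qed
  qed
qed

lemma derivation_funpow_mult_eq_zero:
  assumes D: "derivation R D" and a: "a \<in> carrier R" and b: "b \<in> carrier R"
    and ha: "(D ^^ Suc m) a = \<zero>" and hb: "(D ^^ Suc n) b = \<zero>"
  shows "(D ^^ Suc (m + n)) (a \<otimes> b) = \<zero>"
proof -
  have x: "(D ^^ m) a \<in> carrier R" and y: "(D ^^ n) b \<in> carrier R"
    using derivation_funpow_closed[OF D] a b by auto
  have "D ((D ^^ m) a \<otimes> (D ^^ n) b) = \<zero>"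
    using derivation_mult[OF D x y] ha hb x y by simp
  then show ?thesis
    using derivation_funpow_mult_top[OF D a b ha hb] x y
    by (simp add: derivation_mult[OF D] derivation_of_nat[OF D])
qed

lemma derivation_funpow_eq_zero_mono:
  "derivation R D \<Longrightarrow> (D ^^ n) x = \<zero> \<Longrightarrow> (D ^^ (k + n)) x = \<zero>"
  by (simp add: funpow_add derivation_funpow_zero)

end

definition exact_degree :: "('x, 'n) ring_scheme \<Rightarrow> ('x \<Rightarrow> 'x) \<Rightarrow> nat \<Rightarrow> 'x \<Rightarrow> bool" where
  "exact_degree A D d z \<longleftrightarrow> (D ^^ Suc d) z = \<zero>\<^bsub>A\<^esub> \<and> (D ^^ d) z \<noteq> \<zero>\<^bsub>A\<^esub>"

context domain
begin

lemma exact_degree_mult: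
  assumes D: "derivation R D" and char_0: "\<And>k::nat. k \<noteq> 0 \<Longrightarrow> [k] \<cdot> \<one> \<noteq> \<zero>"
    and a: "a \<in> carrier R" and b: "b \<in> carrier R"
    and ea: "exact_degree R D m a" and eb: "exact_degree R D n b"
  shows "exact_degree R D (m + n) (a \<otimes> b)"
proof -
  have x: "(D ^^ m) a \<in> carrier R" and y: "(D ^^ n) b \<in> carrier R"
    using derivation_funpow_closed[OF D] a b by auto
  have "[(m + n choose m)] \<cdot> \<one> \<noteq> \<zero>" using char_0 by simp
  then have "(D ^^ (m + n)) (a \<otimes> b) \<noteq> \<zero>"
    using ea eb x y derivation_funpow_mult_top[OF D a b]
    unfolding exact_degree_def by (simp add: integral_iff)
  moreover have "(D ^^ Suc (m + n)) (a \<otimes> b) = \<zero>"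
    using ea eb unfolding exact_degree_def by (intro derivation_funpow_mult_eq_zero[OF D a b]) auto
  ultimately show ?thesis unfolding exact_degree_def by simp
qed

lemma exact_degree_derivation:
  "exact_degree R D (Suc d) z \<Longrightarrow> exact_degree R D d (D z)"
  unfolding exact_degree_def by (simp add: funpow_Suc_right del: funpow.simps)

text \<open>If D q \<noteq> 0 then q has positive exact D-degree, hence so does every (q D)^k v.\<close>
lemma kernel_of_nilpotent_multiple_at_slice:
  assumes D: "derivation R D" and char_0: "\<And>k::nat. k \<noteq> 0 \<Longrightarrow> [k] \<cdot> \<one> \<noteq> \<zero>"
    and lnd: "locally_nilpotent R D"
    and v: "v \<in> carrier R" "D v \<noteq> \<zero>" "D (D v) = \<zero>"
    and q: "q \<in> carrier R" and N: "((\<lambda>x. q \<otimes> D x) ^^ N) v = \<zero>"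
  shows "D q = \<zero>"
proof (rule ccontr)
  assume Dq: "D q \<noteq> \<zero>"
  define F where "F = (\<lambda>x. q \<otimes> D x)"
  have F_closed: "(F ^^ k) v \<in> carrier R" for k
    by (induction k) (simp_all add: F_def v q derivation_closed[OF D])
  obtain n where n: "(D ^^ n) q = \<zero>" using lnd q unfolding locally_nilpotent_def by blast
  define n0 where "n0 = (LEAST n. (D ^^ n) q = \<zero>)"
  have n0: "(D ^^ n0) q = \<zero>" unfolding n0_def by (rule LeastI[of _ n], rule n)
  have n0_min: "k < n0 \<Longrightarrow> (D ^^ k) q \<noteq> \<zero>" for k unfolding n0_def by (rule not_less_Least)
  have "n0 \<noteq> 0" using n0 Dq derivation_zero[OF D] by (cases n0) auto
  moreover have "n0 \<noteq> 1" using n0 Dq by auto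
  ultimately obtain e where e: "n0 = Suc (Suc e)" by (metis One_nat_def not0_implies_Suc)
  have eq: "exact_degree R D (Suc e) q"
    unfolding exact_degree_def using n0 n0_min[of "Suc e"] e by (simp del: funpow.simps)
  have "\<exists>d. exact_degree R D (Suc d) ((F ^^ k) v)" for k
  proof (induction k)
    case 0 show ?case using v by (intro exI[of _ 0]) (simp add: exact_degree_def)
  next
    case (Suc k)
    then obtain d where "exact_degree R D (Suc d) ((F ^^ k) v)" by blast
    then have "exact_degree R D (Suc e + d) (q \<otimes> D ((F ^^ k) v))"
      by (intro exact_degree_mult[OF D char_0 q derivation_closed[OF D F_closed] eq]
          exact_degree_derivation)
    then show ?case by (auto simp: F_def)
  qed
  then obtain d where "exact_degree R D d ((F ^^ N) v)" by blast
  then show False using N derivation_funpow_zero[OF D] unfolding F_def exact_degree_def by simp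
qed

end

lemma (in domain) char_0_of_complex_ring_hom:
  assumes h: "h \<in> ring_hom complex_ring R" and k: "k \<noteq> 0"
  shows "[(k::nat)] \<cdot> \<one> \<noteq> \<zero>"
proof
  assume zero: "[k] \<cdot> \<one> = \<zero>"
  have add: "h (x + y) = h x \<oplus> h y" and mult: "h (x * y) = h x \<otimes> h y" for x y
    using ring_hom_add[OF h] ring_hom_mult[OF h] by (simp_all add: complex_ring_def)
  have closed: "h x \<in> carrier R" for x
    using ring_hom_closed[OF h] by (simp add: complex_ring_def)
  have one: "h 1 = \<one>" using ring_hom_one[OF h] by (simp add: complex_ring_def)
  have "h (of_nat n) = [n] \<cdot> \<one>" for n
  proof (induction n)
    case 0
    have "h 0 \<oplus> h 0 = h 0" using add[of 0 0] by simp
    then show ?case using closed[of 0] by (simp add: add.l_cancel_one')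
  next
    case (Suc n) then show ?case using add[of 1 "of_nat n"] closed by (simp add: one a_comm)
  qed
  have "\<one> = h (of_nat k * (1 / of_nat k))" using k one by simp
  also have "\<dots> = h (of_nat k) \<otimes> h (1 / of_nat k)" by (rule mult)
  also have "\<dots> = \<zero>" using zero closed \<open>h (of_nat k) = [k] \<cdot> \<one>\<close> by simp
  finally show False by simp
qed

lemma (in factorial_domain) divides_of_coprime_mult_eq:
  assumes r: "r \<in> carrier R" and s: "s \<in> carrier R" and b: "b \<in> carrier R" and c: "c \<in> carrier R"
    and r0: "r \<noteq> \<zero>" and s0: "s \<noteq> \<zero>"
    and coprime: "\<forall>d\<in>carrier R. d divides r \<and> d divides s \<longrightarrow> d \<in> Units R"
    and eq: "r \<otimes> c = s \<otimes> b"
  shows "r divides b"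
proof (cases "b = \<zero>")
  case True then show ?thesis using r by (simp add: divides_zero)
next
  case False
  let ?G = "mult_of R"
  have G: "r \<in> carrier ?G" "s \<in> carrier ?G" "b \<in> carrier ?G"
    using r s b r0 s0 False by auto
  have gcd: "gcd_condition_monoid ?G" by (rule gcd_condition)
  define g where "g = somegcd ?G r s"
  have g: "g \<in> carrier ?G"
    unfolding g_def using gcd_condition_monoid.gcd_closed[OF gcd G(1,2)] .
  have "g divides\<^bsub>?G\<^esub> r" "g divides\<^bsub>?G\<^esub> s"
    unfolding g_def using G gcd_condition_monoid.gcd_divides_l[OF gcd] gcd_condition_monoid.gcd_divides_r[OF gcd]
    by blast+
  then have gU: "g \<in> Units ?G" using coprime g by auto
  have "c \<noteq> \<zero>" using eq r s b s0 False integral_iff by force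
  then have "r divides\<^bsub>?G\<^esub> b \<otimes> s"
    using eq b s c r by (auto intro: dividesI simp: m_comm)
  then have "r divides\<^bsub>?G\<^esub> somegcd ?G (b \<otimes> r) (b \<otimes> s)"
    using G by (intro gcd_condition_monoid.gcd_divides[OF gcd]) (auto simp: mult_of.divides_prod_l integral_iff)
  moreover have "b \<otimes> g \<sim>\<^bsub>?G\<^esub> somegcd ?G (b \<otimes> r) (b \<otimes> s)"
    using gcd_condition_monoid.gcd_mult[OF gcd G] unfolding g_def by simp
  ultimately have "r divides\<^bsub>?G\<^esub> b \<otimes> g"
    using mult_of.divides_cong_r[OF _ mult_of.associated_sym] G by blast
  moreover have "b \<otimes> g \<sim>\<^bsub>?G\<^esub> b" using gU G by (intro mult_of.associatedI2[OF gU]) simp_all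
  ultimately show "r divides b" using mult_of.divides_cong_r G by fastforce
qed

section \<open>The algebra A_{r,s}\<close>

locale ars_domain =
  fixes R :: "'a ring" (structure) and r s :: 'a
  assumes domain_R: "domain R" and r_closed: "r \<in> carrier R" and s_closed: "s \<in> carrier R"
    and r_nonzero: "r \<noteq> \<zero>" and s_nonzero: "s \<noteq> \<zero>" and domain_Ars: "domain (Ars R r s)"

sublocale ars_domain \<subseteq> R: domain R by (rule domain_R)
sublocale ars_domain \<subseteq> PR: UP_domain R "UP R" by unfold_locales
sublocale ars_domain \<subseteq> PPR: UP_domain "UP R" "UP2 R"
  by (rule UP_domain.intro[OF PR.UP_domain]) unfold_locales
sublocale ars_domain \<subseteq> A: domain "Ars R r s" by (rule domain_Ars)

context ars_domain
begin

abbreviation "A \<equiv> Ars R r s"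
abbreviation "I \<equiv> PIdl\<^bsub>UP2 R\<^esub> (frs R r s)"
abbreviation "\<rho> \<equiv> rho R r s"
abbreviation "u \<equiv> uel R r s"
abbreviation "v \<equiv> vel R r s"

lemma cst2_closed: "a \<in> carrier R \<Longrightarrow> cst2 R a \<in> carrier (UP2 R)"
  unfolding cst2_def by simp

lemma Uvar_closed: "Uvar R \<in> carrier (UP2 R)"
  unfolding Uvar_def by simp

lemma Vvar_closed: "Vvar R \<in> carrier (UP2 R)"
  unfolding Vvar_def by simp

lemma frs_closed: "frs R r s \<in> carrier (UP2 R)"
  unfolding frs_def using cst2_closed Uvar_closed Vvar_closed r_closed s_closed by simp

lemma ideal_frs: "ideal I (UP2 R)"
  by (rule PPR.cgenideal_ideal[OF frs_closed])

lemma resid_ring_hom: "resid R r s \<in> ring_hom (UP2 R) A"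
proof -
  have "resid R r s = (+>\<^bsub>UP2 R\<^esub>) I" by (rule ext) (simp add: resid_def)
  then show ?thesis unfolding Ars_def by (simp add: ideal.rcos_ring_hom[OF ideal_frs])
qed

sublocale resid: ring_hom_cring "UP2 R" A "resid R r s"
  by (rule UnivPoly.ring_hom_cringI[OF PPR.UP_cring A.cring_axioms resid_ring_hom])

lemma rho_ring_hom: "\<rho> \<in> ring_hom R A"
proof -
  have "\<rho> = resid R r s \<circ> (\<lambda>c. monom (UP2 R) c 0) \<circ> (\<lambda>a. monom (UP R) a 0)"
    by (rule ext) (simp add: rho_def cst2_def)
  then show ?thesis
    using ring_hom_trans[OF ring_hom_trans[OF PR.const_ring_hom PPR.const_ring_hom] resid_ring_hom]
    by (simp add: comp_assoc)
qed

sublocale rho: ring_hom_cring R A \<rho>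
  by (rule UnivPoly.ring_hom_cringI[OF R.cring_axioms A.cring_axioms rho_ring_hom])

lemma u_closed [simp]: "u \<in> carrier A"
  unfolding uel_def by (rule resid.hom_closed[OF Uvar_closed])

lemma v_closed [simp]: "v \<in> carrier A"
  unfolding vel_def by (rule resid.hom_closed[OF Vvar_closed])

lemma Ars_carrier: "z \<in> carrier A \<Longrightarrow> \<exists>p\<in>carrier (UP2 R). z = resid R r s p"
  unfolding Ars_def FactRing_def resid_def by (auto simp: A_RCOSETS_def')

lemma resid_eq_zero_iff: "p \<in> carrier (UP2 R) \<Longrightarrow> resid R r s p = \<zero>\<^bsub>A\<^esub> \<longleftrightarrow> p \<in> I"
  unfolding resid_def Ars_def FactRing_def
  using ideal.rcos_const_imp_mem[OF ideal_frs] PPR.a_rcos_zero[OF ideal_frs] by auto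

lemma Ars_relation_minus: "\<rho> r \<otimes>\<^bsub>A\<^esub> u \<ominus>\<^bsub>A\<^esub> \<rho> s \<otimes>\<^bsub>A\<^esub> v = \<one>\<^bsub>A\<^esub>"
proof -
  have "frs R r s \<in> I" by (rule PPR.cgenideal_self[OF frs_closed])
  then have "(\<rho> r \<otimes>\<^bsub>A\<^esub> u \<ominus>\<^bsub>A\<^esub> \<rho> s \<otimes>\<^bsub>A\<^esub> v) \<ominus>\<^bsub>A\<^esub> \<one>\<^bsub>A\<^esub> = \<zero>\<^bsub>A\<^esub>"
    using resid_eq_zero_iff[OF frs_closed] cst2_closed Uvar_closed Vvar_closed r_closed s_closed
    unfolding frs_def by (simp add: PPR.minus_eq A.minus_eq rho_def uel_def vel_def)
  then show ?thesis using r_closed s_closed by (simp add: A.r_right_minus_eq)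
qed

lemma Ars_relation: "\<rho> r \<otimes>\<^bsub>A\<^esub> u = \<one>\<^bsub>A\<^esub> \<oplus>\<^bsub>A\<^esub> \<rho> s \<otimes>\<^bsub>A\<^esub> v"
proof -
  have "\<rho> r \<otimes>\<^bsub>A\<^esub> u = (\<rho> r \<otimes>\<^bsub>A\<^esub> u \<ominus>\<^bsub>A\<^esub> \<rho> s \<otimes>\<^bsub>A\<^esub> v) \<oplus>\<^bsub>A\<^esub> \<rho> s \<otimes>\<^bsub>A\<^esub> v"
    using r_closed s_closed by (simp add: A.minus_eq A.a_assoc A.l_neg)
  then show ?thesis by (simp add: Ars_relation_minus)
qed

lemma Ars_induct [consumes 1, case_names add mult rho u v]:
  assumes z: "z \<in> carrier A"
    and add: "\<And>x y. x \<in> carrier A \<Longrightarrow> y \<in> carrier A \<Longrightarrow> Q x \<Longrightarrow> Q y \<Longrightarrow> Q (x \<oplus>\<^bsub>A\<^esub> y)"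
    and mult: "\<And>x y. x \<in> carrier A \<Longrightarrow> y \<in> carrier A \<Longrightarrow> Q x \<Longrightarrow> Q y \<Longrightarrow> Q (x \<otimes>\<^bsub>A\<^esub> y)"
    and rho: "\<And>a. a \<in> carrier R \<Longrightarrow> Q (\<rho> a)"
    and u: "Q u" and v: "Q v"
  shows "Q z"
proof -
  obtain p where p: "p \<in> carrier (UP2 R)" "z = resid R r s p" using Ars_carrier[OF z] by blast
  have const: "resid R r s \<circ> (\<lambda>c. monom (UP2 R) c 0) \<in> ring_hom (UP R) A"
    by (rule ring_hom_trans[OF PPR.const_ring_hom resid_ring_hom])
  have "Q (resid R r s (monom (UP2 R) c 0))" if c: "c \<in> carrier (UP R)" for c
    using PR.ring_hom_image_induct[OF const A.ring_axioms add mult, of c] c rho u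
    by (simp add: rho_def cst2_def uel_def Uvar_def)
  then show ?thesis
    using PPR.ring_hom_image_induct[OF resid_ring_hom A.ring_axioms add mult, of p] p v
    by (simp add: vel_def Vvar_def)
qed

lemma derivation_eq_on_generators:
  assumes D1: "derivation A D1" and D2: "derivation A D2"
    and rho: "\<And>a. a \<in> carrier R \<Longrightarrow> D1 (\<rho> a) = D2 (\<rho> a)"
    and u: "D1 u = D2 u" and v: "D1 v = D2 v" and x: "x \<in> carrier A"
  shows "D1 x = D2 x"
  using x
proof (induction rule: Ars_induct)
  case (add x y) then show ?case by (simp add: A.derivation_add[OF D1] A.derivation_add[OF D2])
next
  case (mult x y) then show ?case by (simp add: A.derivation_mult[OF D1] A.derivation_mult[OF D2])
qed (use rho u v in simp_all)

lemma frs_coeff_Vvar: "coeff (UP2 R) (frs R r s) 1 = \<ominus>\<^bsub>UP R\<^esub> monom (UP R) s 0"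
proof -
  have "cst2 R r \<otimes>\<^bsub>UP2 R\<^esub> Uvar R = monom (UP2 R) (monom (UP R) r 0 \<otimes>\<^bsub>UP R\<^esub> monom (UP R) \<one> 1) 0"
    and "cst2 R s \<otimes>\<^bsub>UP2 R\<^esub> Vvar R = monom (UP2 R) (monom (UP R) s 0) 1"
    unfolding cst2_def Uvar_def Vvar_def using r_closed s_closed
    by (subst PPR.monom_mult[symmetric]; simp)+
  then show ?thesis unfolding frs_def using r_closed s_closed by (simp add: PR.minus_eq)
qed

lemma deg_frs: "1 \<le> deg (UP R) (frs R r s)"
proof (rule PPR.deg_belowI[OF _ frs_closed])
  have "monom (UP R) s 0 \<noteq> \<zero>\<^bsub>UP R\<^esub>"
  proof
    assume "monom (UP R) s 0 = \<zero>\<^bsub>UP R\<^esub>"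
    then have "coeff (UP R) (monom (UP R) s 0) 0 = \<zero>" by simp
    then show False using s_nonzero s_closed by simp
  qed
  then show "coeff (UP2 R) (frs R r s) 1 \<noteq> \<zero>\<^bsub>UP R\<^esub>"
    unfolding frs_coeff_Vvar using s_closed by (metis PR.P.add.inv_eq_1_iff PR.monom_closed)
qed

text \<open>A nonzero constant cannot be a multiple of rU - sV - 1, which has positive degree in V.\<close>
lemma rho_eq_zero_iff: "a \<in> carrier R \<Longrightarrow> \<rho> a = \<zero>\<^bsub>A\<^esub> \<longleftrightarrow> a = \<zero>"
proof
  assume a: "a \<in> carrier R" and "\<rho> a = \<zero>\<^bsub>A\<^esub>"
  then have "cst2 R a \<in> I" using resid_eq_zero_iff cst2_closed unfolding rho_def by blast
  then obtain g where g: "g \<in> carrier (UP2 R)" "cst2 R a = g \<otimes>\<^bsub>UP2 R\<^esub> frs R r s"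
    unfolding cgenideal_def by blast
  have "g = \<zero>\<^bsub>UP2 R\<^esub>"
  proof (rule ccontr)
    assume "g \<noteq> \<zero>\<^bsub>UP2 R\<^esub>"
    moreover have "frs R r s \<noteq> \<zero>\<^bsub>UP2 R\<^esub>" using deg_frs by auto
    ultimately have "deg (UP R) (cst2 R a) = deg (UP R) g + deg (UP R) (frs R r s)"
      using g frs_closed by simp
    moreover have "deg (UP R) (cst2 R a) = 0" unfolding cst2_def using a by simp
    ultimately show False using deg_frs by simp
  qed
  then have "cst2 R a = \<zero>\<^bsub>UP2 R\<^esub>" using g frs_closed by simp
  then have "coeff (UP R) (coeff (UP2 R) (cst2 R a) 0) 0 = \<zero>" by simp
  then show "a = \<zero>" using a unfolding cst2_def by simp
qed simp

lemma rho_inj: assumes a: "a \<in> carrier R" and b: "b \<in> carrier R" and eq: "\<rho> a = \<rho> b"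
  shows "a = b"
proof -
  have "\<rho> (a \<ominus> b) = \<zero>\<^bsub>A\<^esub>" using a b eq by (simp add: R.minus_eq A.minus_eq A.r_neg)
  then show ?thesis using a b rho_eq_zero_iff[of "a \<ominus> b"] by simp
qed

lemma rho_r_nonzero: "\<rho> r \<noteq> \<zero>\<^bsub>A\<^esub>"
  using rho_eq_zero_iff[OF r_closed] r_nonzero by blast

text \<open>The derivation E = s d/dU + r d/dV is the \<epsilon>-component of the evaluation
  R[U,V] \<rightarrow> A[\<epsilon>] at U \<mapsto> u + s\<epsilon>, V \<mapsto> v + r\<epsilon>,
  which kills rU - sV - 1 because rs - sr = 0.\<close>

abbreviation "A\<epsilon> \<equiv> dual_numbers A"

definition dual_const :: "'a \<Rightarrow> (nat \<Rightarrow> nat \<Rightarrow> 'a) set \<times> (nat \<Rightarrow> nat \<Rightarrow> 'a) set" where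
  "dual_const a = (\<rho> a, \<zero>\<^bsub>A\<^esub>)"

lemma dual_const_ring_hom: "dual_const \<in> ring_hom R A\<epsilon>"
  unfolding dual_const_def by (intro ring_hom_memI) (auto simp: dual_numbers_simps)

lemma dual_u_closed: "(u, \<rho> s) \<in> carrier A\<epsilon>" and dual_v_closed: "(v, \<rho> r) \<in> carrier A\<epsilon>"
  using r_closed s_closed by (simp_all add: dual_numbers_simps)

interpretation eval_U: UP_pre_univ_prop R A\<epsilon> dual_const "UP R"
  by (intro UP_pre_univ_prop.intro UnivPoly.ring_hom_cringI R.cring_axioms A.cring_dual_numbers
      dual_const_ring_hom PR.UP_cring_axioms)

definition dual_eval_U :: "(nat \<Rightarrow> 'a) \<Rightarrow> (nat \<Rightarrow> nat \<Rightarrow> 'a) set \<times> (nat \<Rightarrow> nat \<Rightarrow> 'a) set" where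
  "dual_eval_U = eval R A\<epsilon> dual_const (u, \<rho> s)"

lemma dual_eval_U_ring_hom: "dual_eval_U \<in> ring_hom (UP R) A\<epsilon>"
  unfolding dual_eval_U_def by (rule eval_U.eval_ring_hom[OF dual_u_closed])

interpretation eval_V: UP_pre_univ_prop "UP R" A\<epsilon> dual_eval_U "UP2 R"
  by (intro UP_pre_univ_prop.intro UnivPoly.ring_hom_cringI PR.UP_cring A.cring_dual_numbers
      dual_eval_U_ring_hom PPR.UP_cring_axioms)

definition dual_eval :: "(nat \<Rightarrow> nat \<Rightarrow> 'a) \<Rightarrow> (nat \<Rightarrow> nat \<Rightarrow> 'a) set \<times> (nat \<Rightarrow> nat \<Rightarrow> 'a) set" where
  "dual_eval = eval (UP R) A\<epsilon> dual_eval_U (v, \<rho> r)"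

lemma dual_eval_ring_hom: "dual_eval \<in> ring_hom (UP2 R) A\<epsilon>"
  unfolding dual_eval_def by (rule eval_V.eval_ring_hom[OF dual_v_closed])

lemma dual_eval_U_const: "a \<in> carrier R \<Longrightarrow> dual_eval_U (monom (UP R) a 0) = (\<rho> a, \<zero>\<^bsub>A\<^esub>)"
  unfolding dual_eval_U_def using eval_U.eval_const[OF dual_u_closed] by (simp add: dual_const_def)

lemma dual_eval_U_var: "dual_eval_U (monom (UP R) \<one> 1) = (u, \<rho> s)"
  unfolding dual_eval_U_def using eval_U.eval_monom1[OF dual_u_closed] by simp

lemma dual_eval_const: "c \<in> carrier (UP R) \<Longrightarrow> dual_eval (monom (UP2 R) c 0) = dual_eval_U c"
  unfolding dual_eval_def by (rule eval_V.eval_const[OF dual_v_closed])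

lemma dual_eval_cst2: "a \<in> carrier R \<Longrightarrow> dual_eval (cst2 R a) = (\<rho> a, \<zero>\<^bsub>A\<^esub>)"
  unfolding dual_eval_def cst2_def by (simp add: eval_V.eval_const[OF dual_v_closed] dual_eval_U_const)

lemma dual_eval_Uvar: "dual_eval (Uvar R) = (u, \<rho> s)"
  unfolding dual_eval_def Uvar_def
  by (simp add: eval_V.eval_const[OF dual_v_closed] dual_eval_U_var[unfolded One_nat_def])

lemma dual_eval_var: "dual_eval (monom (UP2 R) \<one>\<^bsub>UP R\<^esub> 1) = (v, \<rho> r)"
  unfolding dual_eval_def by (rule eval_V.eval_monom1[OF dual_v_closed])

lemma dual_eval_Vvar: "dual_eval (Vvar R) = (v, \<rho> r)"
  unfolding Vvar_def by (rule dual_eval_var)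

lemma dual_eval_frs: "dual_eval (frs R r s) = \<zero>\<^bsub>A\<epsilon>\<^esub>"
proof -
  interpret h: ring_hom_cring "UP2 R" A\<epsilon> dual_eval
    by (rule UnivPoly.ring_hom_cringI[OF PPR.UP_cring A.cring_dual_numbers dual_eval_ring_hom])
  have minus: "dual_eval (p \<ominus>\<^bsub>UP2 R\<^esub> q) = dual_eval p \<ominus>\<^bsub>A\<epsilon>\<^esub> dual_eval q"
    if "p \<in> carrier (UP2 R)" "q \<in> carrier (UP2 R)" for p q
    using that by (simp add: a_minus_def)
  have "dual_eval (frs R r s) = (\<rho> r \<otimes>\<^bsub>A\<^esub> u \<ominus>\<^bsub>A\<^esub> \<rho> s \<otimes>\<^bsub>A\<^esub> v \<ominus>\<^bsub>A\<^esub> \<one>\<^bsub>A\<^esub>,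
      \<rho> r \<otimes>\<^bsub>A\<^esub> \<rho> s \<ominus>\<^bsub>A\<^esub> \<rho> s \<otimes>\<^bsub>A\<^esub> \<rho> r \<ominus>\<^bsub>A\<^esub> \<zero>\<^bsub>A\<^esub>)"
    unfolding frs_def using cst2_closed Uvar_closed Vvar_closed r_closed s_closed
    by (simp add: minus dual_eval_cst2 dual_eval_Uvar dual_eval_Vvar A.dual_numbers_minus dual_numbers_simps)
  also have "\<dots> = \<zero>\<^bsub>A\<epsilon>\<^esub>"
    using Ars_relation_minus r_closed s_closed by (simp add: dual_numbers_simps A.m_comm A.r_right_minus_eq)
  finally show ?thesis .
qed

interpretation resid_U: UP_pre_univ_prop R A \<rho> "UP R"
  by (intro UP_pre_univ_prop.intro UnivPoly.ring_hom_cringI R.cring_axioms A.cring_axioms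
      rho_ring_hom PR.UP_cring_axioms)

lemma fst_dual_eval_U:
  assumes c: "c \<in> carrier (UP R)"
  shows "fst (dual_eval_U c) = resid R r s (monom (UP2 R) c 0)"
proof -
  have "(fst \<circ> dual_eval_U) c = (resid R r s \<circ> (\<lambda>c. monom (UP2 R) c 0)) c"
  proof (rule resid_U.UP_hom_unique[OF _ _ _ _ _ _ c u_closed])
    show "ring_hom_cring (UP R) A (fst \<circ> dual_eval_U)"
      using ring_hom_trans[OF dual_eval_U_ring_hom A.fst_ring_hom_dual_numbers]
      by (rule UnivPoly.ring_hom_cringI[OF PR.UP_cring A.cring_axioms])
    show "ring_hom_cring (UP R) A (resid R r s \<circ> (\<lambda>c. monom (UP2 R) c 0))"
      using ring_hom_trans[OF PPR.const_ring_hom resid_ring_hom]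
      by (rule UnivPoly.ring_hom_cringI[OF PR.UP_cring A.cring_axioms])
  qed (simp_all add: dual_eval_U_const dual_eval_U_var[unfolded One_nat_def] uel_def Uvar_def
      rho_def cst2_def)
  then show ?thesis by simp
qed

interpretation resid_V: UP_pre_univ_prop "UP R" A "fst \<circ> dual_eval_U" "UP2 R"
  by (intro UP_pre_univ_prop.intro UnivPoly.ring_hom_cringI PR.UP_cring A.cring_axioms
      ring_hom_trans[OF dual_eval_U_ring_hom A.fst_ring_hom_dual_numbers] PPR.UP_cring_axioms)

lemma fst_dual_eval:
  assumes p: "p \<in> carrier (UP2 R)"
  shows "fst (dual_eval p) = resid R r s p"
proof -
  have "(fst \<circ> dual_eval) p = resid R r s p"
  proof (rule resid_V.UP_hom_unique[OF _ _ _ _ _ _ p v_closed])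
    show "ring_hom_cring (UP2 R) A (fst \<circ> dual_eval)"
      using ring_hom_trans[OF dual_eval_ring_hom A.fst_ring_hom_dual_numbers]
      by (rule UnivPoly.ring_hom_cringI[OF PPR.UP_cring A.cring_axioms])
    show "ring_hom_cring (UP2 R) A (resid R r s)"
      by (rule UnivPoly.ring_hom_cringI[OF PPR.UP_cring A.cring_axioms resid_ring_hom])
  qed (simp_all add: dual_eval_const fst_dual_eval_U dual_eval_var[unfolded One_nat_def] vel_def Vvar_def)
  then show ?thesis by simp
qed

lemma dual_eval_kills_ideal: "i \<in> I \<Longrightarrow> dual_eval i = \<zero>\<^bsub>A\<epsilon>\<^esub>"
proof -
  assume "i \<in> I"
  then obtain g where g: "g \<in> carrier (UP2 R)" and i: "i = g \<otimes>\<^bsub>UP2 R\<^esub> frs R r s"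
    unfolding cgenideal_def by blast
  interpret h: ring_hom_cring "UP2 R" A\<epsilon> dual_eval
    by (rule UnivPoly.ring_hom_cringI[OF PPR.UP_cring A.cring_dual_numbers dual_eval_ring_hom])
  interpret D: cring A\<epsilon> by (rule A.cring_dual_numbers)
  show ?thesis using g frs_closed by (simp add: i dual_eval_frs)
qed

lemma exists_derivation_uv: "\<exists>E. lin_derivation A (carrier R) \<rho> E \<and> E u = \<rho> s \<and> E v = \<rho> r"
proof -
  obtain \<psi> where \<psi>: "\<psi> \<in> ring_hom A A\<epsilon>"
    and \<psi>_coset: "\<And>p. p \<in> carrier (UP2 R) \<Longrightarrow> \<psi> (I +>\<^bsub>UP2 R\<^esub> p) = dual_eval p"
    using PPR.ring_hom_quotient_lift[OF ideal_frs dual_eval_ring_hom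
        cring.axioms(1)[OF A.cring_dual_numbers] dual_eval_kills_ideal]
    unfolding Ars_def by blast
  have \<psi>_resid: "\<psi> (resid R r s p) = dual_eval p" if "p \<in> carrier (UP2 R)" for p
    using \<psi>_coset[OF that] by (simp add: resid_def)
  have "fst (\<psi> z) = z" if "z \<in> carrier A" for z
    using Ars_carrier[OF that] \<psi>_resid fst_dual_eval by auto
  then have "derivation A (snd \<circ> \<psi>)" by (rule A.derivation_dual_hom[OF \<psi>])
  moreover have "(snd \<circ> \<psi>) (\<rho> a) = \<zero>\<^bsub>A\<^esub>" if "a \<in> carrier R" for a
    using that \<psi>_resid[OF cst2_closed] dual_eval_cst2 by (simp add: rho_def)
  ultimately have "lin_derivation A (carrier R) \<rho> (snd \<circ> \<psi>)"
    by (simp add: A.lin_derivation_iff)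
  moreover have "(snd \<circ> \<psi>) u = \<rho> s" "(snd \<circ> \<psi>) v = \<rho> r"
    using \<psi>_resid[OF Uvar_closed] \<psi>_resid[OF Vvar_closed] dual_eval_Uvar dual_eval_Vvar
    by (simp_all add: uel_def vel_def)
  ultimately show ?thesis by blast
qed

end

section \<open>Locally nilpotent derivations of A_{r,s}\<close>

locale ars_makar_limanov = ars_domain +
  fixes \<iota> :: "complex \<Rightarrow> 'a"
  assumes \<iota>: "\<iota> \<in> ring_hom complex_ring R"
    and factorial_R: "factorial_domain R"
    and coprime: "\<forall>d\<in>carrier R. d divides r \<and> d divides s \<longrightarrow> d \<in> Units R"
    and makar_limanov: "makar_limanov (Ars R r s) (rho R r s \<circ> \<iota>) = rho R r s ` carrier R"
begin

lemma Ars_char_0: "k \<noteq> 0 \<Longrightarrow> [(k::nat)] \<cdot>\<^bsub>A\<^esub> \<one>\<^bsub>A\<^esub> \<noteq> \<zero>\<^bsub>A\<^esub>"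
  by (rule A.char_0_of_complex_ring_hom[OF ring_hom_trans[OF \<iota> rho_ring_hom]])

lemma embedding_closed: "(\<rho> \<circ> \<iota>) \<in> UNIV \<rightarrow> carrier A"
  using ring_hom_closed[OF \<iota>] by (simp add: complex_ring_def)

lemma LND_derivation: "is_LND A (\<rho> \<circ> \<iota>) D \<Longrightarrow> derivation A D"
  unfolding is_LND_iff by (blast intro: lin_derivation_imp_derivation)

lemma LND_locally_nilpotent: "is_LND A (\<rho> \<circ> \<iota>) D \<Longrightarrow> locally_nilpotent A D"
  unfolding is_LND_iff by blast

lemma LND_kills_rho: "is_LND A (\<rho> \<circ> \<iota>) D \<Longrightarrow> a \<in> carrier R \<Longrightarrow> D (\<rho> a) = \<zero>\<^bsub>A\<^esub>"
  using makar_limanov unfolding makar_limanov_def by blast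

context
  fixes E
  assumes E: "lin_derivation A (carrier R) \<rho> E" and E_u: "E u = \<rho> s" and E_v: "E v = \<rho> r"
begin

lemma E_derivation: "derivation A E"
  using E by (rule lin_derivation_imp_derivation)

lemma E_rho: "a \<in> carrier R \<Longrightarrow> E (\<rho> a) = \<zero>\<^bsub>A\<^esub>"
  using E A.lin_derivation_iff[of \<rho> "carrier R"] by auto

lemma E_rho_mult: "a \<in> carrier R \<Longrightarrow> x \<in> carrier A \<Longrightarrow> E (\<rho> a \<otimes>\<^bsub>A\<^esub> x) = \<rho> a \<otimes>\<^bsub>A\<^esub> E x"
  using E unfolding lin_derivation_def by blast

lemma E_locally_nilpotent: "locally_nilpotent A E"
  unfolding locally_nilpotent_def
proof
  fix x assume "x \<in> carrier A"
  then show "\<exists>n. (E ^^ n) x = \<zero>\<^bsub>A\<^esub>"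
  proof (induction rule: Ars_induct)
    case (add x y)
    then obtain m n where "(E ^^ m) x = \<zero>\<^bsub>A\<^esub>" "(E ^^ n) y = \<zero>\<^bsub>A\<^esub>" by blast
    then have "(E ^^ (m + n)) x = \<zero>\<^bsub>A\<^esub>" "(E ^^ (m + n)) y = \<zero>\<^bsub>A\<^esub>"
      using A.derivation_funpow_eq_zero_mono[OF E_derivation, of m x n]
        A.derivation_funpow_eq_zero_mono[OF E_derivation, of n y m] by (simp_all add: add.commute)
    then show ?case using add by (intro exI[of _ "m + n"]) (simp add: A.derivation_funpow_add[OF E_derivation])
  next
    case (mult x y)
    then obtain m n where "(E ^^ m) x = \<zero>\<^bsub>A\<^esub>" "(E ^^ n) y = \<zero>\<^bsub>A\<^esub>" by blast
    then have "(E ^^ Suc m) x = \<zero>\<^bsub>A\<^esub>" "(E ^^ Suc n) y = \<zero>\<^bsub>A\<^esub>"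
      using A.derivation_funpow_eq_zero_mono[OF E_derivation, of _ _ 1] by simp_all
    then have "(E ^^ Suc (m + n)) (x \<otimes>\<^bsub>A\<^esub> y) = \<zero>\<^bsub>A\<^esub>"
      using mult by (intro A.derivation_funpow_mult_eq_zero[OF E_derivation])
    then show ?case ..
  next
    case (rho a) show ?case using E_rho[OF rho] by (intro exI[of _ 1]) simp
  next
    case u show ?case using E_rho[OF s_closed] E_u by (intro exI[of _ 2]) (simp add: numeral_2_eq_2)
  next
    case v show ?case using E_rho[OF r_closed] E_v by (intro exI[of _ 2]) (simp add: numeral_2_eq_2)
  qed
qed

lemma derivation_v_mult_E:
  assumes D: "derivation A D" and D_rho: "\<And>a. a \<in> carrier R \<Longrightarrow> D (\<rho> a) = \<zero>\<^bsub>A\<^esub>"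
    and x: "x \<in> carrier A"
  shows "D v \<otimes>\<^bsub>A\<^esub> E x = \<rho> r \<otimes>\<^bsub>A\<^esub> D x"
proof (rule derivation_eq_on_generators[OF _ _ _ _ _ x])
  have Dv: "D v \<in> carrier A" by (rule A.derivation_closed[OF D v_closed])
  show "derivation A (\<lambda>x. D v \<otimes>\<^bsub>A\<^esub> E x)" by (rule A.derivation_scale[OF E_derivation Dv])
  show "derivation A (\<lambda>x. \<rho> r \<otimes>\<^bsub>A\<^esub> D x)" using r_closed by (intro A.derivation_scale[OF D]) simp
  show "D v \<otimes>\<^bsub>A\<^esub> E (\<rho> a) = \<rho> r \<otimes>\<^bsub>A\<^esub> D (\<rho> a)" if "a \<in> carrier R" for a
    using that Dv r_closed by (simp add: E_rho D_rho)
  show "D v \<otimes>\<^bsub>A\<^esub> E v = \<rho> r \<otimes>\<^bsub>A\<^esub> D v" using Dv r_closed by (simp add: E_v A.m_comm)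
  have "\<rho> r \<otimes>\<^bsub>A\<^esub> D u = D (\<rho> r \<otimes>\<^bsub>A\<^esub> u)"
    using r_closed A.derivation_closed[OF D] by (simp add: A.derivation_mult[OF D] D_rho)
  also have "\<dots> = \<rho> s \<otimes>\<^bsub>A\<^esub> D v"
    using s_closed Dv by (simp add: Ars_relation A.derivation_add[OF D] A.derivation_mult[OF D]
        A.derivation_one[OF D] D_rho)
  finally show "D v \<otimes>\<^bsub>A\<^esub> E u = \<rho> r \<otimes>\<^bsub>A\<^esub> D u" using Dv s_closed by (simp add: E_u A.m_comm)
qed

lemma kernel_E_subset_rho:
  assumes z: "z \<in> carrier A" and Ez: "E z = \<zero>\<^bsub>A\<^esub>"
  shows "z \<in> \<rho> ` carrier R"
proof -
  have "D z = \<zero>\<^bsub>A\<^esub>" if D: "is_LND A (\<rho> \<circ> \<iota>) D" for D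
  proof -
    have "\<rho> r \<otimes>\<^bsub>A\<^esub> D z = \<zero>\<^bsub>A\<^esub>"
      using derivation_v_mult_E[OF LND_derivation[OF D] LND_kills_rho[OF D] z] Ez
        A.derivation_closed[OF LND_derivation[OF D] v_closed] by simp
    then show ?thesis
      using rho_r_nonzero r_closed A.derivation_closed[OF LND_derivation[OF D] z] by (simp add: A.integral_iff)
  qed
  then have "z \<in> makar_limanov A (\<rho> \<circ> \<iota>)" using z unfolding makar_limanov_def by blast
  then show ?thesis using makar_limanov by simp
qed

lemma E_kills_LND_v:
  assumes D: "is_LND A (\<rho> \<circ> \<iota>) D"
  shows "E (D v) = \<zero>\<^bsub>A\<^esub>"
proof -
  note D' = LND_derivation[OF D]
  have Dv: "D v \<in> carrier A" by (rule A.derivation_closed[OF D' v_closed])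
  have "\<exists>N. (D ^^ N) v = \<zero>\<^bsub>A\<^esub>"
    using LND_locally_nilpotent[OF D] v_closed unfolding locally_nilpotent_def by (rule bspec)
  then obtain N where N: "(D ^^ N) v = \<zero>\<^bsub>A\<^esub>" ..
  have closed: "(\<lambda>y. D v \<otimes>\<^bsub>A\<^esub> E y) \<in> carrier A \<rightarrow> carrier A"
    using Dv A.derivation_closed[OF E_derivation] by (simp add: Pi_iff)
  have "((\<lambda>y. D v \<otimes>\<^bsub>A\<^esub> E y) ^^ N) v = ((\<lambda>y. \<rho> r \<otimes>\<^bsub>A\<^esub> D y) ^^ N) v"
    by (rule funpow_cong_on[OF closed derivation_v_mult_E[OF D' LND_kills_rho[OF D]] v_closed])
  also have "\<dots> = \<rho> r [^]\<^bsub>A\<^esub> N \<otimes>\<^bsub>A\<^esub> (D ^^ N) v"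
    using r_closed LND_kills_rho[OF D r_closed] by (intro A.derivation_funpow_scale[OF D']) simp_all
  finally have nilpotent: "((\<lambda>y. D v \<otimes>\<^bsub>A\<^esub> E y) ^^ N) v = \<zero>\<^bsub>A\<^esub>" using N r_closed by simp
  have slice: "E v \<noteq> \<zero>\<^bsub>A\<^esub>" "E (E v) = \<zero>\<^bsub>A\<^esub>"
    using E_v rho_r_nonzero E_rho[OF r_closed] by simp_all
  show ?thesis
    by (rule A.kernel_of_nilpotent_multiple_at_slice[OF E_derivation _ E_locally_nilpotent v_closed
        slice Dv nilpotent], rule Ars_char_0)
qed

lemma LND_imp_rho_mult_E:
  assumes D: "is_LND A (\<rho> \<circ> \<iota>) D"
  shows "\<exists>a\<in>carrier R. \<forall>x\<in>carrier A. D x = \<rho> a \<otimes>\<^bsub>A\<^esub> E x"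
proof -
  note D' = LND_derivation[OF D] and D_rho = LND_kills_rho[OF D]
  have Du: "D u \<in> carrier A" and Dv: "D v \<in> carrier A"
    using A.derivation_closed[OF D'] by simp_all
  have uv: "\<rho> r \<otimes>\<^bsub>A\<^esub> D u = \<rho> s \<otimes>\<^bsub>A\<^esub> D v"
    using derivation_v_mult_E[OF D' D_rho u_closed] E_u Dv s_closed by (simp add: A.m_comm)
  have E_Dv: "E (D v) = \<zero>\<^bsub>A\<^esub>" by (rule E_kills_LND_v[OF D])
  have "\<rho> r \<otimes>\<^bsub>A\<^esub> E (D u) = \<rho> s \<otimes>\<^bsub>A\<^esub> E (D v)"
    using uv Du Dv r_closed s_closed by (simp flip: E_rho_mult)
  then have "E (D u) = \<zero>\<^bsub>A\<^esub>"
    using E_Dv s_closed rho_r_nonzero r_closed A.derivation_closed[OF E_derivation Du] by (simp add: A.integral_iff)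
  obtain b where b: "b \<in> carrier R" "D v = \<rho> b" using kernel_E_subset_rho[OF Dv E_Dv] by blast
  obtain c where c: "c \<in> carrier R" "D u = \<rho> c"
    using kernel_E_subset_rho[OF Du \<open>E (D u) = \<zero>\<^bsub>A\<^esub>\<close>] by blast
  have "r \<otimes> c = s \<otimes> b" using uv b c r_closed s_closed by (intro rho_inj) simp_all
  then have "r divides b"
    using factorial_domain.divides_of_coprime_mult_eq[OF factorial_R r_closed s_closed b(1) c(1)
        r_nonzero s_nonzero coprime] by blast
  then obtain a where a: "a \<in> carrier R" "b = r \<otimes> a" unfolding factor_def by blast
  show ?thesis
  proof (intro bexI[OF _ a(1)] ballI)
    fix x assume x: "x \<in> carrier A"
    have "\<rho> r \<otimes>\<^bsub>A\<^esub> D x = \<rho> r \<otimes>\<^bsub>A\<^esub> (\<rho> a \<otimes>\<^bsub>A\<^esub> E x)"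
      using derivation_v_mult_E[OF D' D_rho x] a b r_closed A.derivation_closed[OF E_derivation x]
      by (simp add: A.m_assoc)
    then show "D x = \<rho> a \<otimes>\<^bsub>A\<^esub> E x"
      using rho_r_nonzero r_closed a A.derivation_closed[OF E_derivation x] A.derivation_closed[OF D' x]
        A.m_lcancel by simp
  qed
qed

lemma LND_of_rho_mult_E:
  assumes a: "a \<in> carrier R" and D: "\<And>x. x \<in> carrier A \<Longrightarrow> D x = \<rho> a \<otimes>\<^bsub>A\<^esub> E x"
  shows "is_LND A (\<rho> \<circ> \<iota>) D"
  unfolding is_LND_iff A.lin_derivation_iff[OF embedding_closed]
proof (intro conjI ballI)
  have "derivation A (\<lambda>x. \<rho> a \<otimes>\<^bsub>A\<^esub> E x)" using a by (intro A.derivation_scale[OF E_derivation]) simp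
  then show "derivation A D" using D by (rule A.derivation_cong)
  show "D ((\<rho> \<circ> \<iota>) c) = \<zero>\<^bsub>A\<^esub>" for c
    using D a E_rho ring_hom_closed[OF \<iota>] by (simp add: complex_ring_def)
  show "locally_nilpotent A D"
    unfolding locally_nilpotent_def
  proof
    fix x assume x: "x \<in> carrier A"
    have "\<exists>n. (E ^^ n) x = \<zero>\<^bsub>A\<^esub>"
      using E_locally_nilpotent x unfolding locally_nilpotent_def by (rule bspec)
    then obtain n where n: "(E ^^ n) x = \<zero>\<^bsub>A\<^esub>" ..
    have "D \<in> carrier A \<rightarrow> carrier A"
      using a D A.derivation_closed[OF E_derivation] by (simp add: Pi_iff)
    then have "(D ^^ n) x = ((\<lambda>y. \<rho> a \<otimes>\<^bsub>A\<^esub> E y) ^^ n) x"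
      by (rule funpow_cong_on[OF _ D x])
    also have "\<dots> = \<rho> a [^]\<^bsub>A\<^esub> n \<otimes>\<^bsub>A\<^esub> (E ^^ n) x"
      using a x E_rho by (intro A.derivation_funpow_scale[OF E_derivation]) simp_all
    finally show "\<exists>n. (D ^^ n) x = \<zero>\<^bsub>A\<^esub>" using n a by (intro exI[of _ n]) simp
  qed
qed

lemma LND_iff_rho_mult_E:
  "is_LND A (\<rho> \<circ> \<iota>) D \<longleftrightarrow>
    D \<in> carrier A \<rightarrow> carrier A \<and> (\<exists>a\<in>carrier R. \<forall>x\<in>carrier A. D x = \<rho> a \<otimes>\<^bsub>A\<^esub> E x)"
proof
  assume D: "is_LND A (\<rho> \<circ> \<iota>) D"
  have "D \<in> carrier A \<rightarrow> carrier A"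
    using LND_derivation[OF D] unfolding derivation_def by (rule conjunct1)
  then show "D \<in> carrier A \<rightarrow> carrier A \<and> (\<exists>a\<in>carrier R. \<forall>x\<in>carrier A. D x = \<rho> a \<otimes>\<^bsub>A\<^esub> E x)"
    using LND_imp_rho_mult_E[OF D] by (rule conjI)
next
  assume "D \<in> carrier A \<rightarrow> carrier A \<and> (\<exists>a\<in>carrier R. \<forall>x\<in>carrier A. D x = \<rho> a \<otimes>\<^bsub>A\<^esub> E x)"
  then obtain a where a: "a \<in> carrier R" and D: "\<forall>x\<in>carrier A. D x = \<rho> a \<otimes>\<^bsub>A\<^esub> E x"
    by (elim conjE bexE)
  show "is_LND A (\<rho> \<circ> \<iota>) D" by (rule LND_of_rho_mult_E[OF a D[rule_format]])
qed

end

end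

theorem mainTheorem3:
  fixes R :: "'a ring" and \<iota> :: "complex \<Rightarrow> 'a" and r s :: 'a
  assumes "noetherian_domain R"
    and "factorial_domain R"
    and "\<iota> \<in> ring_hom complex_ring R"
    and "r \<in> carrier R" and "s \<in> carrier R"
    and "r \<noteq> \<zero>\<^bsub>R\<^esub>" and "s \<noteq> \<zero>\<^bsub>R\<^esub>"
    and "\<forall>d\<in>carrier R. d divides\<^bsub>R\<^esub> r \<and> d divides\<^bsub>R\<^esub> s \<longrightarrow> d \<in> Units R"
    and "factorial_domain (Ars R r s)"
    and "makar_limanov (Ars R r s) (rho R r s \<circ> \<iota>) = rho R r s ` carrier R"
  shows "(\<exists>E. lin_derivation (Ars R r s) (carrier R) (rho R r s) E
              \<and> E (uel R r s) = rho R r s s \<and> E (vel R r s) = rho R r s r)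
       \<and> (\<forall>E. lin_derivation (Ars R r s) (carrier R) (rho R r s) E
              \<and> E (uel R r s) = rho R r s s \<and> E (vel R r s) = rho R r s r \<longrightarrow>
            (\<forall>D. is_LND (Ars R r s) (rho R r s \<circ> \<iota>) D \<longleftrightarrow>
                 (D \<in> carrier (Ars R r s) \<rightarrow> carrier (Ars R r s) \<and>
                  (\<exists>a\<in>carrier R. \<forall>x\<in>carrier (Ars R r s).
                     D x = rho R r s a \<otimes>\<^bsub>Ars R r s\<^esub> E x))))"
proof -
  interpret ars_makar_limanov R r s \<iota>
    by (intro ars_makar_limanov.intro ars_domain.intro ars_makar_limanov_axioms.intro assms(2-8,10)
        factorial_domain.axioms(1)[OF assms(2)] factorial_domain.axioms(1)[OF assms(9)])
  show ?thesis
    by (intro conjI allI impI exists_derivation_uv; elim conjE; rule LND_iff_rho_mult_E)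
qed

end
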